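(* Let $w$ be a metric on $V$, $T$ a minimum spanning tree of $G_w$, and $T'$ a subtree of $T$. Let $e=(u,v)$ be a pair with $u\in V(T')$ and $v\notin V(T')$. Then $\mathsf{adv}(\{e\},T')\le \mathsf{adv}^*(T')$.
   Context: $w$ is a metric on a finite set $V$, $G_w$ the complete graph on $V$ with edge weights $w$, and $w(E')=\sum_{e\in E'}w(e)$ for a set of pairs $E'$. For a pair $e=(u,v)$, $P^T_e$ is the $u$–$v$ path in $T$; an edge $f\in E(T)$ is covered by $e$ iff $f\in E(P^T_e)$; $\mathsf{cov}(E')$ is the set of edges of $T$ covered by some pair of $E'$, and for a subtree $T'$, $\mathsf{cov}(E',T')=\mathsf{cov}(E')\cap E(T')$ and $\mathsf{adv}(E',T')=w(\mathsf{cov}(E',T'))-w(E')$. A vertex $x$ of $T'$ is a special vertex of $T'$ iff $\deg_{T'}(x)\neq 2$. The optimal special cover advantage $\mathsf{adv}^*(T')$ is the maximum of $\mathsf{adv}(E',T')$ over all sets $E'$ of pairs each having at least one endpoint that is a special vertex of $T'$ (the empty set is allowed, so $\mathsf{adv}^*(T')\ge 0$). *)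

theory Defs
  imports Complex_Main
begin

text \<open>Vertices have type 'a; edges / pairs are unordered doubletons {x,y} with x \<noteq> y.\<close>

definition metric_on :: "'a set \<Rightarrow> ('a \<Rightarrow> 'a \<Rightarrow> real) \<Rightarrow> bool" where
  "metric_on V w \<longleftrightarrow>
     (\<forall>x\<in>V. w x x = 0) \<and>
     (\<forall>x\<in>V. \<forall>y\<in>V. x \<noteq> y \<longrightarrow> w x y > 0) \<and>
     (\<forall>x\<in>V. \<forall>y\<in>V. w x y = w y x) \<and>
     (\<forall>x\<in>V. \<forall>y\<in>V. \<forall>z\<in>V. w x z \<le> w x y + w y z)"

text \<open>All pairs of distinct elements of V: the edge set of the complete graph G_w.\<close>
definition all_pairs :: "'a set \<Rightarrow> 'a set set" where
  "all_pairs V = {{x, y} | x y. x \<in> V \<and> y \<in> V \<and> x \<noteq> y}"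

definition pw :: "('a \<Rightarrow> 'a \<Rightarrow> real) \<Rightarrow> 'a set \<Rightarrow> real" where
  "pw w e = (THE d. \<exists>x y. e = {x, y} \<and> x \<noteq> y \<and> d = w x y)"

definition wset :: "('a \<Rightarrow> 'a \<Rightarrow> real) \<Rightarrow> 'a set set \<Rightarrow> real" where
  "wset w F = (\<Sum>e\<in>F. pw w e)"

definition walk :: "'a set set \<Rightarrow> 'a list \<Rightarrow> bool" where
  "walk E xs \<longleftrightarrow> xs \<noteq> [] \<and> (\<forall>i. Suc i < length xs \<longrightarrow> {xs ! i, xs ! Suc i} \<in> E)"

definition simple_path :: "'a set set \<Rightarrow> 'a list \<Rightarrow> 'a \<Rightarrow> 'a \<Rightarrow> bool" where
  "simple_path E xs u v \<longleftrightarrow> walk E xs \<and> distinct xs \<and> hd xs = u \<and> last xs = v"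

definition path_edges :: "'a list \<Rightarrow> 'a set set" where
  "path_edges xs = {{xs ! i, xs ! Suc i} | i. Suc i < length xs}"

definition has_cycle :: "'a set set \<Rightarrow> bool" where
  "has_cycle E \<longleftrightarrow> (\<exists>xs. walk E xs \<and> distinct xs \<and> length xs \<ge> 3 \<and> {last xs, hd xs} \<in> E)"

definition is_tree :: "'a set \<Rightarrow> 'a set set \<Rightarrow> bool" where
  "is_tree V E \<longleftrightarrow> finite V \<and> V \<noteq> {} \<and> E \<subseteq> all_pairs V \<and>
     (\<forall>x\<in>V. \<forall>y\<in>V. \<exists>xs. simple_path E xs x y) \<and> \<not> has_cycle E"

definition spanning_tree :: "'a set \<Rightarrow> 'a set set \<Rightarrow> bool" where
  "spanning_tree V T \<longleftrightarrow> is_tree V T"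

definition min_spanning_tree :: "'a set \<Rightarrow> ('a \<Rightarrow> 'a \<Rightarrow> real) \<Rightarrow> 'a set set \<Rightarrow> bool" where
  "min_spanning_tree V w T \<longleftrightarrow> spanning_tree V T \<and>
     (\<forall>T2. spanning_tree V T2 \<longrightarrow> wset w T \<le> wset w T2)"

definition subtree :: "'a set \<Rightarrow> 'a set set \<Rightarrow> 'a set \<Rightarrow> 'a set set \<Rightarrow> bool" where
  "subtree V T V' E' \<longleftrightarrow> V' \<subseteq> V \<and> E' \<subseteq> T \<and> is_tree V' E'"

definition tree_path_edges :: "'a set set \<Rightarrow> 'a \<Rightarrow> 'a \<Rightarrow> 'a set set" where
  "tree_path_edges T u v = \<Union>{path_edges xs | xs. simple_path T xs u v}"

definition cov :: "'a set set \<Rightarrow> 'a set set \<Rightarrow> 'a set set" where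
  "cov T F = {f \<in> T. \<exists>u v. {u, v} \<in> F \<and> f \<in> tree_path_edges T u v}"

definition adv :: "'a set set \<Rightarrow> ('a \<Rightarrow> 'a \<Rightarrow> real) \<Rightarrow> 'a set set \<Rightarrow> 'a set set \<Rightarrow> real" where
  "adv T w F E' = wset w (cov T F \<inter> E') - wset w F"

definition degree :: "'a set set \<Rightarrow> 'a \<Rightarrow> nat" where
  "degree E x = card {f \<in> E. x \<in> f}"

definition special :: "'a set \<Rightarrow> 'a set set \<Rightarrow> 'a \<Rightarrow> bool" where
  "special V' E' x \<longleftrightarrow> x \<in> V' \<and> degree E' x \<noteq> 2"

definition adv_star :: "'a set \<Rightarrow> 'a set set \<Rightarrow> ('a \<Rightarrow> 'a \<Rightarrow> real) \<Rightarrow> 'a set \<Rightarrow> 'a set set \<Rightarrow> real" where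
  "adv_star V T w V' E' = Max {adv T w F E' | F. F \<subseteq> all_pairs V \<and>
      (\<forall>e\<in>F. \<exists>x\<in>e. special V' E' x)}"

end

theory Submission
  imports Defs
begin

text \<open>Let Q be the tree path from u to v. Walk backwards from u along edges of T' for as long as
  possible without meeting the walk so far or Q. As T is acyclic, a vertex of degree at least 2 in T'
  always has a neighbour off the current path, so the walk ends at a leaf a of T', a special vertex.
  The tree path from a to v is this walk P followed by Q, so the pair (a, v) covers in addition
  exactly the edges of P, while by the triangle inequality w(a, v) - w(u, v) \<le> w(a, u) \<le> w(P).
  Hence adv({(u, v)}, T') \<le> adv({(a, v)}, T') \<le> adv*(T').\<close>

lemma not_walk_Nil [simp]: "\<not> walk E []"
  by (simp add: walk_def)

lemma walk_singleton [simp]: "walk E [x]"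
  by (simp add: walk_def)

lemma walk_Cons_Cons [simp]: "walk E (x # y # zs) \<longleftrightarrow> {x, y} \<in> E \<and> walk E (y # zs)"
  by (auto simp: walk_def nth_Cons split: nat.splits)

lemma walk_Cons: "xs \<noteq> [] \<Longrightarrow> walk E (x # xs) \<longleftrightarrow> {x, hd xs} \<in> E \<and> walk E xs"
  by (cases xs) auto

lemma path_edges_Nil [simp]: "path_edges [] = {}"
  by (simp add: path_edges_def)

lemma path_edges_singleton [simp]: "path_edges [x] = {}"
  by (simp add: path_edges_def)

lemma path_edges_Cons_Cons [simp]:
  "path_edges (x # y # zs) = insert {x, y} (path_edges (y # zs))"
proof (rule set_eqI, rule iffI)
  fix f
  assume "f \<in> path_edges (x # y # zs)"
  then obtain i where f: "f = {(x # y # zs) ! i, (x # y # zs) ! Suc i}" "Suc i < length (x # y # zs)"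
    unfolding path_edges_def by blast
  show "f \<in> insert {x, y} (path_edges (y # zs))"
  proof (cases i)
    case 0
    then show ?thesis using f by simp
  next
    case (Suc j)
    then show ?thesis using f unfolding path_edges_def by auto
  qed
next
  fix f
  assume "f \<in> insert {x, y} (path_edges (y # zs))"
  then show "f \<in> path_edges (x # y # zs)"
  proof
    assume "f = {x, y}"
    then show ?thesis unfolding path_edges_def by force
  next
    assume "f \<in> path_edges (y # zs)"
    then obtain j where "f = {(y # zs) ! j, (y # zs) ! Suc j}" "Suc j < length (y # zs)"
      unfolding path_edges_def by blast
    then have "f = {(x # y # zs) ! Suc j, (x # y # zs) ! Suc (Suc j)}"
      and "Suc (Suc j) < length (x # y # zs)"
      by auto
    then show ?thesis unfolding path_edges_def by blast
  qed
qed

lemma path_edges_subset_set: "f \<in> path_edges xs \<Longrightarrow> f \<subseteq> set xs"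
  by (auto simp: path_edges_def)

lemma finite_path_edges [simp]: "finite (path_edges xs)"
  by (induction xs rule: induct_list012) auto

lemma walk_path_edges_subset: "walk E xs \<Longrightarrow> path_edges xs \<subseteq> E"
  by (auto simp: walk_def path_edges_def)

lemma walk_mono: "E \<subseteq> F \<Longrightarrow> walk E xs \<Longrightarrow> walk F xs"
  by (auto simp: walk_def)

lemma walk_take: "walk E xs \<Longrightarrow> 0 < n \<Longrightarrow> walk E (take n xs)"
  by (auto simp: walk_def)

lemma walk_append: "walk E (xs @ [y]) \<Longrightarrow> walk E (y # ys) \<Longrightarrow> walk E (xs @ y # ys)"
  by (induction xs rule: induct_list012) auto

lemma path_edges_append:
  "path_edges (xs @ y # ys) = path_edges (xs @ [y]) \<union> path_edges (y # ys)"
  by (induction xs rule: induct_list012) auto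

lemma path_edges_append_disjoint:
  assumes "distinct (xs @ y # ys)"
  shows "path_edges (xs @ [y]) \<inter> path_edges (y # ys) = {}"
proof -
  have "f \<notin> path_edges (xs @ [y])" if f_mem: "f \<in> path_edges (y # ys)" for f
  proof
    obtain i where "f = {(y # ys) ! i, (y # ys) ! Suc i}" "Suc i < length (y # ys)"
      using f_mem unfolding path_edges_def by blast
    then have "ys ! i \<in> f" "ys ! i \<in> set ys" by auto
    moreover assume "f \<in> path_edges (xs @ [y])"
    ultimately show False
      using assms path_edges_subset_set by fastforce
  qed
  then show ?thesis by blast
qed

lemma walk_rev: "walk E xs \<Longrightarrow> walk E (rev xs)"
proof (induction xs rule: induct_list012)
  case (3 x y zs)
  then show ?case using walk_append[of E "rev zs" y "[x]"] by (simp add: insert_commute)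
qed auto

lemma path_edges_rev [simp]: "path_edges (rev xs) = path_edges xs"
proof (induction xs rule: induct_list012)
  case (3 x y zs)
  then show ?case using path_edges_append[of "rev zs" y "[x]"] by (simp add: insert_commute)
qed auto

lemma simple_path_rev: "simple_path E xs x y \<Longrightarrow> simple_path E (rev xs) y x"
  by (auto simp: simple_path_def walk_rev hd_rev last_rev)

lemma walk_vertices_subset:
  "walk E xs \<Longrightarrow> E \<subseteq> all_pairs W \<Longrightarrow> last xs \<in> W \<Longrightarrow> set xs \<subseteq> W"
  by (induction xs rule: induct_list012) (auto simp: all_pairs_def doubleton_eq_iff)

lemma has_cycleI:
  assumes "walk E xs" "distinct xs" "2 \<le> j" "j < length xs" "{xs ! j, hd xs} \<in> E"
  shows "has_cycle E"
proof -
  let ?ys = "take (Suc j) xs"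
  have "walk E ?ys" "distinct ?ys" "3 \<le> length ?ys"
    using assms walk_take by auto
  moreover have "{last ?ys, hd ?ys} \<in> E"
    using assms by (cases xs) (auto simp: last_conv_nth)
  ultimately show ?thesis
    unfolding has_cycle_def by blast
qed

lemma acyclic_walk_unique:
  assumes "\<not> has_cycle E"
  shows "walk E xs \<Longrightarrow> walk E ys \<Longrightarrow> distinct xs \<Longrightarrow> distinct ys
    \<Longrightarrow> hd xs = hd ys \<Longrightarrow> last xs = last ys \<Longrightarrow> xs = ys"
proof (induction ys arbitrary: xs)
  case Nil
  then show ?case by simp
next
  case (Cons x ys')
  obtain xs' where xs: "xs = x # xs'"
    using Cons.prems by (cases xs) auto
  consider "ys' = [] \<or> xs' = []" | y ys'' y' xs'' where "ys' = y # ys''" "xs' = y' # xs''"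
    by (meson list.exhaust)
  then show ?case
  proof cases
    case 1
    then show ?thesis
      using Cons.prems xs by (metis distinct.simps(2) last_ConsL last_ConsR last_in_set)
  next
    case 2
    have xy: "{x, y} \<in> E" and walks: "walk E ys'" "walk E xs'"
      using Cons.prems xs 2 by auto
    show ?thesis
    proof (cases "y \<in> set xs")
      case True
      then obtain k where k: "k < length xs" "xs ! k = y"
        by (metis in_set_conv_nth)
      have "y \<noteq> x"
        using Cons.prems(4) 2 by auto
      then have "k \<noteq> 0"
        using k xs by (metis nth_Cons_0)
      moreover have "\<not> 2 \<le> k"
        using has_cycleI[of E xs k] assms Cons.prems k xs xy by (auto simp: insert_commute)
      ultimately have "k = 1"
        by linarith
      then have "xs' = ys'"
        using Cons.IH[of xs'] Cons.prems walks k xs 2 by auto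
      then show ?thesis
        using xs by simp
    next
      case False
      \<comment> \<open>Then y # xs is a second path from y to the common endpoint, so it is ys',
        which would contain x twice.\<close>
      have "y # xs = ys'"
        using Cons.IH[of "y # xs"] Cons.prems walks xy xs 2 False by (auto simp: insert_commute)
      then show ?thesis
        using Cons.prems(4) xs by auto
    qed
  qed
qed

lemma simple_path_unique:
  "\<not> has_cycle E \<Longrightarrow> simple_path E xs x y \<Longrightarrow> simple_path E ys x y \<Longrightarrow> xs = ys"
  unfolding simple_path_def using acyclic_walk_unique by metis

lemma tree_path_edges_commute: "tree_path_edges T x y = tree_path_edges T y x"
proof -
  have "tree_path_edges T x y \<subseteq> tree_path_edges T y x" for x y
  proof
    fix f assume "f \<in> tree_path_edges T x y"
    then obtain xs where "simple_path T xs x y" "f \<in> path_edges xs"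
      unfolding tree_path_edges_def by blast
    then have "simple_path T (rev xs) y x" "f \<in> path_edges (rev xs)"
      using simple_path_rev by auto
    then show "f \<in> tree_path_edges T y x"
      unfolding tree_path_edges_def by blast
  qed
  then show ?thesis by blast
qed

lemma cov_singleton: "cov T {{x, y}} = T \<inter> tree_path_edges T x y"
proof -
  have "{u, v} = {x, y} \<and> f \<in> tree_path_edges T u v
      \<longleftrightarrow> {u, v} = {x, y} \<and> f \<in> tree_path_edges T x y" for f u v
    using tree_path_edges_commute[of T x y] by (auto simp: doubleton_eq_iff)
  then show ?thesis
    unfolding cov_def by blast
qed

lemma tree_path_edges_eq:
  "\<not> has_cycle T \<Longrightarrow> simple_path T Q x y \<Longrightarrow> tree_path_edges T x y = path_edges Q"
proof -
  assume "\<not> has_cycle T" "simple_path T Q x y"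
  then have "{xs. simple_path T xs x y} = {Q}"
    using simple_path_unique by fastforce
  moreover have "{path_edges xs | xs. simple_path T xs x y} = path_edges ` {xs. simple_path T xs x y}"
    by blast
  ultimately have "{path_edges xs | xs. simple_path T xs x y} = {path_edges Q}"
    by simp
  then show ?thesis
    unfolding tree_path_edges_def by simp
qed

lemma acyclic_neighbour_not_on_path:
  assumes "\<not> has_cycle E" "walk E R" "distinct R" "{hd R, c} \<in> E" "c \<noteq> hd R" "c \<noteq> R ! 1"
  shows "c \<notin> set R"
proof
  assume "c \<in> set R"
  then obtain j where j: "j < length R" "R ! j = c"
    by (metis in_set_conv_nth)
  have "j \<noteq> 0"
    using j assms(5) by (metis hd_conv_nth list.size(3) not_less_zero)
  moreover have "j \<noteq> 1"
    using j assms(6) by auto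
  ultimately have "2 \<le> j"
    by linarith
  then show False
    using has_cycleI[of E R j] assms j by (simp add: insert_commute)
qed

lemma two_neighboursE:
  assumes "E \<subseteq> all_pairs W" "1 < degree E x"
  obtains c where "{x, c} \<in> E" "c \<noteq> x" "c \<noteq> b"
proof -
  have "finite {f \<in> E. x \<in> f}"
    using assms(2) card.infinite unfolding degree_def by (metis not_less_zero)
  moreover have "\<not> card {f \<in> E. x \<in> f} \<le> Suc 0"
    using assms(2) unfolding degree_def by simp
  ultimately obtain f g where fg: "f \<in> E" "g \<in> E" "x \<in> f" "x \<in> g" "f \<noteq> g"
    using card_le_Suc0_iff_eq by blast
  have "\<exists>c. h = {x, c} \<and> c \<noteq> x" if "h \<in> E" "x \<in> h" for h
    using that assms(1) unfolding all_pairs_def by (fastforce simp: doubleton_eq_iff)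
  then obtain c d where cd: "f = {x, c}" "g = {x, d}" "c \<noteq> x" "d \<noteq> x"
    using fg by meson
  show ?thesis
  proof (cases "c = b")
    case True
    then have "d \<noteq> b" using cd fg(5) by blast
    then show ?thesis using that[of d] cd fg by blast
  next
    case False
    then show ?thesis using that[of c] cd fg by blast
  qed
qed

lemma pw_doubleton: "x \<noteq> y \<Longrightarrow> w y x = w x y \<Longrightarrow> pw w {x, y} = w x y"
  unfolding pw_def by (rule the_equality) (auto simp: doubleton_eq_iff)

lemma metric_pw_doubleton:
  "metric_on V w \<Longrightarrow> x \<in> V \<Longrightarrow> y \<in> V \<Longrightarrow> x \<noteq> y \<Longrightarrow> pw w {x, y} = w x y"
  by (rule pw_doubleton) (auto simp: metric_on_def)

lemma metric_triangle:
  "metric_on V w \<Longrightarrow> x \<in> V \<Longrightarrow> y \<in> V \<Longrightarrow> z \<in> V \<Longrightarrow> w x z \<le> w x y + w y z"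
  by (simp add: metric_on_def)

lemma metric_le_path_weight:
  assumes "metric_on V w" "E \<subseteq> all_pairs V"
  shows "walk E xs \<Longrightarrow> distinct xs \<Longrightarrow> set xs \<subseteq> V
    \<Longrightarrow> w (hd xs) (last xs) \<le> wset w (path_edges xs)"
proof (induction xs rule: induct_list012)
  case (2 x)
  then show ?case using assms(1) by (simp add: wset_def metric_on_def)
next
  case (3 x y zs)
  have "{x, y} \<notin> path_edges (y # zs)"
    using path_edges_subset_set "3.prems"(2) by fastforce
  then have "wset w (path_edges (x # y # zs)) = pw w {x, y} + wset w (path_edges (y # zs))"
    by (simp add: wset_def)
  moreover have "pw w {x, y} = w x y"
    using metric_pw_doubleton[OF assms(1)] "3.prems" by simp
  moreover have "w x (last (y # zs)) \<le> w x y + w y (last (y # zs))"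
  proof -
    have "last (y # zs) \<in> V"
      using "3.prems"(3) last_in_set[of "y # zs"] by auto
    then show ?thesis
      using metric_triangle[OF assms(1)] "3.prems"(3) by simp
  qed
  ultimately show ?case
    using "3.IH"(2) "3.prems" by simp
qed simp

lemma prepend_neighbour_path:
  assumes acyclic: "\<not> has_cycle T" and E'T: "E' \<subseteq> T" and E'V': "E' \<subseteq> all_pairs V'"
    and "walk T Q" and P: "walk E' (P @ [hd Q])" "distinct (P @ Q)"
    and "1 < degree E' (hd (P @ [hd Q]))"
  obtains c where "walk E' (c # P @ [hd Q])" "distinct (c # P @ Q)"
proof -
  let ?a = "hd (P @ [hd Q])" and ?R = "P @ Q"
  obtain c where c: "{?a, c} \<in> E'" "c \<noteq> ?a" "c \<noteq> ?R ! 1"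
    using two_neighboursE[OF E'V' assms(7)] by blast
  obtain Q' where Q_split: "Q = hd Q # Q'"
    using \<open>walk T Q\<close> by (cases Q) auto
  have "walk T ?R"
    using walk_append[OF walk_mono[OF E'T P(1)], of Q'] \<open>walk T Q\<close> Q_split by metis
  moreover have "hd ?R = ?a"
    by (cases P) simp_all
  ultimately have "c \<notin> set ?R"
    using acyclic_neighbour_not_on_path[OF acyclic _ P(2)] c E'T by auto
  moreover have "walk E' (c # P @ [hd Q])"
    using walk_Cons[of "P @ [hd Q]" E' c] P(1) c(1) by (simp add: insert_commute)
  ultimately show ?thesis
    using that P(2) by simp
qed

lemma exists_special_extension:
  assumes acyclic: "\<not> has_cycle T" and E'T: "E' \<subseteq> T" and E'V': "E' \<subseteq> all_pairs V'"
    and "finite V'" and Q: "walk T Q" "distinct Q" "hd Q \<in> V'"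
  obtains P where "walk E' (P @ [hd Q])" "distinct (P @ Q)" "special V' E' (hd (P @ [hd Q]))"
proof -
  let ?u = "hd Q"
  define extends where "extends P \<longleftrightarrow> walk E' (P @ [?u]) \<and> distinct (P @ Q)" for P
  have "length P < Suc (card V')" if "extends P" for P
  proof -
    have "set P \<subseteq> V'"
      using that walk_vertices_subset[OF _ E'V'] Q(3) unfolding extends_def by fastforce
    moreover have "distinct P"
      using that unfolding extends_def by simp
    ultimately show ?thesis
      using \<open>finite V'\<close> by (metis card_mono distinct_card less_Suc_eq_le)
  qed
  moreover have "extends []"
    using Q(2) unfolding extends_def by simp
  ultimately obtain P where P: "extends P"
    and longest: "\<And>P'. extends P' \<Longrightarrow> length P' \<le> length P"
    using Lattices_Big.ex_has_greatest_nat[of extends "[]" length] by blast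
  let ?a = "hd (P @ [?u])"
  have walk_P: "walk E' (P @ [?u])" and distinct_R: "distinct (P @ Q)"
    using P unfolding extends_def by auto
  have "degree E' ?a \<le> 1"
  proof (rule ccontr)
    assume "\<not> degree E' ?a \<le> 1"
    then have "1 < degree E' ?a"
      by simp
    then obtain c where "walk E' (c # P @ [?u])" "distinct (c # P @ Q)"
      by (rule prepend_neighbour_path[OF acyclic E'T E'V' Q(1) walk_P distinct_R])
    then have "extends (c # P)"
      unfolding extends_def by simp
    then show False
      using longest by fastforce
  qed
  moreover have "?a \<in> V'"
    using walk_vertices_subset[OF walk_P E'V'] Q(3) by (cases P) auto
  ultimately have "special V' E' ?a"
    unfolding special_def by simp
  then show ?thesis
    using that walk_P distinct_R by blast
qed

lemma wset_doubleton:
  "metric_on V w \<Longrightarrow> x \<in> V \<Longrightarrow> y \<in> V \<Longrightarrow> x \<noteq> y \<Longrightarrow> wset w {{x, y}} = w x y"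
  by (simp add: wset_def metric_pw_doubleton)

lemma wset_cov_prepend_path:
  assumes "\<not> has_cycle T" and E'T: "E' \<subseteq> T" and P: "walk E' (P @ [u])"
    and Q: "simple_path T Q u v" and R: "simple_path T (P @ Q) (hd (P @ [u])) v"
  shows "wset w (cov T {{hd (P @ [u]), v}} \<inter> E')
    = wset w (path_edges (P @ [u])) + wset w (cov T {{u, v}} \<inter> E')"
proof -
  let ?PE = "path_edges (P @ [u])"
  obtain Q' where Q_split: "Q = u # Q'"
    using Q unfolding simple_path_def by (cases Q) auto
  have "tree_path_edges T (hd (P @ [u])) v = ?PE \<union> path_edges Q"
    using tree_path_edges_eq[OF assms(1) R] path_edges_append[of P u Q'] Q_split by simp
  then have "cov T {{hd (P @ [u]), v}} \<inter> E' = ?PE \<union> path_edges Q \<inter> E'"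
    using cov_singleton[of T "hd (P @ [u])" v] walk_path_edges_subset[OF P] E'T by auto
  moreover have "cov T {{u, v}} \<inter> E' = path_edges Q \<inter> E'"
    using cov_singleton[of T u v] tree_path_edges_eq[OF assms(1) Q] E'T by auto
  moreover have "?PE \<inter> (path_edges Q \<inter> E') = {}"
    using path_edges_append_disjoint[of P u Q'] R Q_split unfolding simple_path_def by auto
  ultimately show ?thesis
    unfolding wset_def by (simp add: sum.union_disjoint)
qed

lemma adv_le_adv_prepend_path:
  assumes metric: "metric_on V w" and "T \<subseteq> all_pairs V" "\<not> has_cycle T" and E'T: "E' \<subseteq> T"
    and Q: "simple_path T Q u v" and "u \<in> V" "v \<in> V" "u \<noteq> v"
    and P: "walk E' (P @ [u])" "distinct (P @ Q)"
  shows "adv T w {{u, v}} E' \<le> adv T w {{hd (P @ [u]), v}} E'"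
proof -
  let ?a = "hd (P @ [u])" and ?R = "P @ Q"
  obtain Q' where Q_split: "Q = u # Q'"
    using Q unfolding simple_path_def by (cases Q) auto
  have E'V: "E' \<subseteq> all_pairs V"
    using E'T assms(2) by blast
  have P_in_V: "set (P @ [u]) \<subseteq> V"
    using walk_vertices_subset[OF P(1) E'V] \<open>u \<in> V\<close> by simp
  have a_in_P: "?a \<in> set (P @ [u])"
    by (cases P) auto
  with P_in_V have "?a \<in> V"
    by blast
  have "walk T ?R"
    using walk_append[OF walk_mono[OF E'T P(1)], of Q'] Q Q_split
    unfolding simple_path_def by metis
  moreover have "hd ?R = ?a"
    using Q_split by (cases P) simp_all
  moreover have "last ?R = v"
    using Q Q_split unfolding simple_path_def by (metis last_appendR list.distinct(1))
  ultimately have "simple_path T ?R ?a v"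
    using P(2) unfolding simple_path_def by simp
  then have "wset w (cov T {{?a, v}} \<inter> E')
      = wset w (path_edges (P @ [u])) + wset w (cov T {{u, v}} \<inter> E')"
    by (rule wset_cov_prepend_path[OF assms(3) E'T P(1) Q])
  moreover have "w ?a u \<le> wset w (path_edges (P @ [u]))"
    using metric_le_path_weight[OF metric E'V P(1)] P(2) P_in_V Q_split by simp
  moreover have "w ?a v \<le> w ?a u + w u v"
    using metric_triangle[OF metric \<open>?a \<in> V\<close>] assms(6,7) .
  moreover have "?a \<noteq> v"
  proof -
    have "v \<in> set Q"
      using Q Q_split unfolding simple_path_def by (metis last_in_set list.distinct(1))
    then show ?thesis
      using a_in_P P(2) \<open>u \<noteq> v\<close> by auto
  qed
  ultimately show ?thesis
    unfolding adv_def using wset_doubleton[OF metric] \<open>?a \<in> V\<close> assms(6-8) by simp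
qed

lemma finite_all_pairs: "finite V \<Longrightarrow> finite (all_pairs V)"
  unfolding all_pairs_def by (rule finite_subset[of _ "Pow V"]) auto

lemma adv_le_adv_star:
  assumes "finite V" "F \<subseteq> all_pairs V" "\<forall>e\<in>F. \<exists>x\<in>e. special V' E' x"
  shows "adv T w F E' \<le> adv_star V T w V' E'"
proof -
  let ?A = "{adv T w F E' | F. F \<subseteq> all_pairs V \<and> (\<forall>e\<in>F. \<exists>x\<in>e. special V' E' x)}"
  have "?A \<subseteq> (\<lambda>F. adv T w F E') ` Pow (all_pairs V)"
    by blast
  then have "finite ?A"
    using finite_all_pairs[OF assms(1)] by (meson finite_Pow_iff finite_imageI finite_subset)
  moreover have "adv T w F E' \<in> ?A"
    using assms(2,3) by blast
  ultimately show ?thesis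
    unfolding adv_star_def by (rule Max_ge)
qed

theorem mainTheorem2:
  fixes V :: "'a set" and w :: "'a \<Rightarrow> 'a \<Rightarrow> real" and T :: "'a set set"
    and V' :: "'a set" and E' :: "'a set set" and u v :: 'a
  assumes "finite V"
    and "metric_on V w"
    and "min_spanning_tree V w T"
    and "subtree V T V' E'"
    and "u \<in> V'" and "v \<in> V" and "v \<notin> V'"
  shows "adv T w {{u, v}} E' \<le> adv_star V T w V' E'"
proof -
  have T: "T \<subseteq> all_pairs V" "\<not> has_cycle T" "\<forall>x\<in>V. \<forall>y\<in>V. \<exists>xs. simple_path T xs x y"
    using assms(3) unfolding min_spanning_tree_def spanning_tree_def is_tree_def by auto
  have E': "V' \<subseteq> V" "E' \<subseteq> T" "E' \<subseteq> all_pairs V'" "finite V'"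
    using assms(4) unfolding subtree_def is_tree_def by auto
  have "u \<in> V" "u \<noteq> v"
    using assms(5,7) E'(1) by auto
  then obtain Q where Q: "simple_path T Q u v"
    using T(3) assms(6) by blast
  then obtain P where P: "walk E' (P @ [u])" "distinct (P @ Q)" "special V' E' (hd (P @ [u]))"
    using exists_special_extension[OF T(2) E'(2-4)] assms(5) unfolding simple_path_def by metis
  let ?a = "hd (P @ [u])"
  have "adv T w {{u, v}} E' \<le> adv T w {{?a, v}} E'"
    using adv_le_adv_prepend_path[OF assms(2) T(1,2) E'(2) Q \<open>u \<in> V\<close> assms(6) \<open>u \<noteq> v\<close> P(1,2)] .
  also have "\<dots> \<le> adv_star V T w V' E'"
  proof (rule adv_le_adv_star[OF assms(1)])
    have "?a \<in> V'" "?a \<noteq> v"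
      using P(3) assms(7) unfolding special_def by auto
    then show "{{?a, v}} \<subseteq> all_pairs V"
      using E'(1) assms(6) unfolding all_pairs_def by blast
    show "\<forall>e\<in>{{?a, v}}. \<exists>x\<in>e. special V' E' x"
      using P(3) by blast
  qed
  finally show ?thesis .
qed

end
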